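(* Let $G=(V,E)$ be a symmetric tree topology with compute nodes $V_C$, and let sets $R,S$ with $|R|\le|S|$ be initially partitioned among the compute nodes, with $N_v$ the number of elements of $R$ and $S$ held by node $v$. Let $E_\beta=\{e\in E:\min\{\sum_{v\in V_e^+}N_v,\sum_{v\in V_e^-}N_v\}\ge|R|\}$ and let $G_\beta$ be the subgraph of $G$ induced by the edge set $E_\beta$. Then $G_\beta$ is a connected tree.
   Context: The network is a directed graph $G=(V,E)$ with compute nodes $V_C\subseteq V$. It is a symmetric tree topology: for every $(u,v)\in E$ also $(v,u)\in E$ with the same bandwidth, and the underlying undirected graph is a tree. For an edge $e=(u,v)$, removing $e$ splits the compute nodes into $V_e^-$ (on $u$'s side) and $V_e^+$ (on $v$'s side). The edge-induced subgraph of $E_\beta$ has as vertices the endpoints of edges in $E_\beta$ and as edges $E_\beta$. *)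

theory Defs
  imports Main
begin

text \<open>Undirected graphs are represented as symmetric directed edge sets.
  A vertex set W is connected w.r.t. edge set F if any two vertices of W
  are joined by a path using edges of F.\<close>

definition ug_connected :: "'v set \<Rightarrow> ('v \<times> 'v) set \<Rightarrow> bool" where
  "ug_connected W F \<longleftrightarrow> (\<forall>a\<in>W. \<forall>b\<in>W. (a, b) \<in> F\<^sup>*)"

definition ug_cycle :: "('v \<times> 'v) set \<Rightarrow> 'v list \<Rightarrow> bool" where
  "ug_cycle F cs \<longleftrightarrow> length cs \<ge> 3 \<and> distinct cs \<and>
     (\<forall>i < length cs. (cs ! i, cs ! ((i + 1) mod length cs)) \<in> F)"

definition ug_acyclic :: "('v \<times> 'v) set \<Rightarrow> bool" where
  "ug_acyclic F \<longleftrightarrow> \<not> (\<exists>cs. ug_cycle F cs)"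

definition is_tree :: "'v set \<Rightarrow> ('v \<times> 'v) set \<Rightarrow> bool" where
  "is_tree W F \<longleftrightarrow> F \<subseteq> W \<times> W \<and> ug_connected W F \<and> ug_acyclic F"

text \<open>Symmetric tree topology: finite vertex set, loop-free symmetric edges,
  underlying undirected graph a tree, compute nodes a subset of the vertices.
  (Bandwidths are irrelevant for the statement.)\<close>

definition sym_tree_topology :: "'v set \<Rightarrow> ('v \<times> 'v) set \<Rightarrow> 'v set \<Rightarrow> bool" where
  "sym_tree_topology V E VC \<longleftrightarrow> finite V \<and> E \<subseteq> V \<times> V \<and> sym E \<and>
     (\<forall>v. (v, v) \<notin> E) \<and> is_tree V E \<and> VC \<subseteq> V"

text \<open>Removing the undirected edge e = (u,v): compute nodes on v's side
  (V_e^+) and on u's side (V_e^-).\<close>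

definition side_plus :: "('v \<times> 'v) set \<Rightarrow> 'v set \<Rightarrow> 'v \<times> 'v \<Rightarrow> 'v set" where
  "side_plus E VC e = {w \<in> VC. (snd e, w) \<in> (E - {e, (snd e, fst e)})\<^sup>*}"

definition side_minus :: "('v \<times> 'v) set \<Rightarrow> 'v set \<Rightarrow> 'v \<times> 'v \<Rightarrow> 'v set" where
  "side_minus E VC e = {w \<in> VC. (fst e, w) \<in> (E - {e, (snd e, fst e)})\<^sup>*}"

definition edge_verts :: "('v \<times> 'v) set \<Rightarrow> 'v set" where
  "edge_verts F = fst ` F \<union> snd ` F"

end

theory Submission
  imports Defs "HOL-Library.Transitive_Closure_Table"
begin

text \<open>Call a set of compute nodes heavy if its \<open>N\<close>-weight is at least \<open>|R|\<close>, so that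
  \<open>E\<^sub>\<beta>\<close> consists of the edges both of whose sides are heavy. Suppose \<open>a a'\<close> and \<open>b b'\<close> are
  such edges in different components of \<open>E\<^sub>\<beta>\<close>, and let \<open>p q\<close> be the first edge on a path
  from \<open>a\<close> to \<open>b\<close> that leaves the component of \<open>a\<close>. Deleting \<open>p q\<close> leaves \<open>a a'\<close> on the
  side of \<open>p\<close> and \<open>b b'\<close> on the side of \<open>q\<close>. As the graph is a tree, the side of \<open>a a'\<close>
  not containing \<open>p\<close> lies entirely inside the side of \<open>p\<close>, and likewise for \<open>b b'\<close> and
  \<open>q\<close>. Heaviness is upward closed, so both sides of \<open>p q\<close> are heavy and \<open>p q \<in> E\<^sub>\<beta>\<close>,
  contradicting its choice.\<close>

lemma rtrancl_restrict_reachable: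
  assumes "(x, w) \<in> F\<^sup>*"
    and "\<And>a b. (x, a) \<in> F\<^sup>* \<Longrightarrow> (a, b) \<in> F \<Longrightarrow> (a, b) \<in> G"
  shows "(x, w) \<in> G\<^sup>*"
  using assms(1)
proof (induction rule: rtrancl_induct)
  case (step y z)
  then show ?case
    using assms(2) by (meson rtrancl_into_rtrancl)
qed simp

lemma rtrancl_Restr_reachable: "(a, w) \<in> F\<^sup>* \<Longrightarrow> (a, w) \<in> (Restr F {z. (a, z) \<in> F\<^sup>*})\<^sup>*"
  by (erule rtrancl_restrict_reachable) (auto intro: rtrancl_into_rtrancl)

lemma rtrancl_exit_edge:
  assumes "(a, z) \<in> E\<^sup>*" "a \<in> C" "z \<notin> C"
  shows "\<exists>p q. (p, q) \<in> E \<and> p \<in> C \<and> q \<notin> C \<and> (q, z) \<in> (Restr E (- C))\<^sup>*"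
  using assms
proof (induction rule: rtrancl_induct)
  case (step y z)
  show ?case
  proof (cases "y \<in> C")
    case False
    with step obtain p q where "(p, q) \<in> E" "p \<in> C" "q \<notin> C" "(q, y) \<in> (Restr E (- C))\<^sup>*"
      by blast
    moreover have "(y, z) \<in> Restr E (- C)"
      using step False by simp
    ultimately show ?thesis
      by (meson rtrancl_into_rtrancl)
  qed (use step in blast)
qed simp

definition del_edge :: "('v \<times> 'v) set \<Rightarrow> 'v \<Rightarrow> 'v \<Rightarrow> ('v \<times> 'v) set" where
  "del_edge E x y = E - {(x, y), (y, x)}"

lemma del_edge_commute: "del_edge E y x = del_edge E x y"
  by (auto simp: del_edge_def)

lemma side_plus_eq: "side_plus E VC (x, y) = {w \<in> VC. (y, w) \<in> (del_edge E x y)\<^sup>*}"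
  by (simp add: side_plus_def del_edge_def)

lemma side_minus_eq: "side_minus E VC (x, y) = {w \<in> VC. (x, w) \<in> (del_edge E x y)\<^sup>*}"
  by (simp add: side_minus_def del_edge_def)

lemma rtrancl_del_edge_sym:
  assumes "sym E" "(x, y) \<in> (del_edge E p q)\<^sup>*"
  shows "(y, x) \<in> (del_edge E p q)\<^sup>*"
proof -
  have "sym (del_edge E p q)"
    using \<open>sym E\<close> by (auto simp: sym_def del_edge_def)
  with assms(2) show ?thesis
    by (meson sym_rtrancl symD)
qed

lemma rtrancl_del_edge_cases:
  assumes "(x, r) \<in> E\<^sup>*"
  shows "(x, r) \<in> (del_edge E x y)\<^sup>* \<or> (y, r) \<in> (del_edge E x y)\<^sup>*"
  using assms
proof (induction rule: rtrancl_induct)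
  case (step s t)
  then show ?case
    by (cases "(s, t) \<in> del_edge E x y") (auto simp: del_edge_def intro: rtrancl_into_rtrancl)
qed simp

lemma ug_acyclic_tree_edge_separates:
  assumes "sym E" "ug_acyclic E" "(u, v) \<in> E" "u \<noteq> v"
  shows "(u, v) \<notin> (del_edge E u v)\<^sup>*"
proof
  let ?D = "\<lambda>a b. (a, b) \<in> del_edge E u v"
  assume "(u, v) \<in> (del_edge E u v)\<^sup>*"
  then obtain xs where "rtrancl_path ?D u xs v"
    using rtranclp_eq_rtrancl_path[of ?D] by (auto simp: rtranclp_rtrancl_eq)
  then obtain xs where path: "rtrancl_path ?D u xs v" and dist: "distinct (u # xs)"
    by (rule rtrancl_path_distinct)
  have "xs \<noteq> []"
    using path \<open>u \<noteq> v\<close> by (auto elim: rtrancl_path.cases)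
  with path have last: "last xs = v"
    by (rule rtrancl_path_last)
  have "length xs \<ge> 2"
  proof (rule ccontr)
    assume "\<not> length xs \<ge> 2"
    with \<open>xs \<noteq> []\<close> last have "xs = [v]"
      by (cases xs rule: rev_cases) (auto simp: Suc_le_eq)
    with rtrancl_path_nth[OF path, of 0] show False
      by (simp add: del_edge_def)
  qed
  have "ug_cycle E (u # xs)"
    unfolding ug_cycle_def
  proof (intro conjI allI impI)
    fix i
    assume i: "i < length (u # xs)"
    show "((u # xs) ! i, (u # xs) ! ((i + 1) mod length (u # xs))) \<in> E"
    proof (cases "i < length xs")
      case True
      then show ?thesis
        using rtrancl_path_nth[OF path True] by (simp add: del_edge_def)
    next
      case False
      with i have "i = length xs" by simp
      then show ?thesis
        using last \<open>xs \<noteq> []\<close> \<open>sym E\<close> \<open>(u, v) \<in> E\<close> by (simp add: last_conv_nth symD)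
    qed
  qed (use \<open>length xs \<ge> 2\<close> dist in auto)
  with \<open>ug_acyclic E\<close> show False
    unfolding ug_acyclic_def by blast
qed

lemma tree_edge_side_subset:
  assumes "sym E" "(x, y) \<notin> (del_edge E x y)\<^sup>*" "r \<in> {p, q}"
    and "(r, x) \<in> (del_edge E p q)\<^sup>*" "(r, y) \<in> (del_edge E p q)\<^sup>*"
  obtains z where "z \<in> {x, y}" "\<And>w. (z, w) \<in> (del_edge E x y)\<^sup>* \<Longrightarrow> (r, w) \<in> (del_edge E p q)\<^sup>*"
proof -
  have "(x, r) \<in> (del_edge E p q)\<^sup>*"
    using rtrancl_del_edge_sym[OF \<open>sym E\<close> assms(4)] .
  then have "(x, r) \<in> E\<^sup>*"
    by (rule rtrancl_mono[THEN subsetD, rotated]) (auto simp: del_edge_def)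
  then have "(x, r) \<in> (del_edge E x y)\<^sup>* \<or> (y, r) \<in> (del_edge E x y)\<^sup>*"
    by (rule rtrancl_del_edge_cases)
  moreover have "\<not> ((x, r) \<in> (del_edge E x y)\<^sup>* \<and> (y, r) \<in> (del_edge E x y)\<^sup>*)"
    using assms(1,2) by (meson rtrancl_trans rtrancl_del_edge_sym)
  ultimately obtain z where z: "z \<in> {x, y}" and zr: "(z, r) \<notin> (del_edge E x y)\<^sup>*"
    by blast
  have "(r, w) \<in> (del_edge E p q)\<^sup>*" if "(z, w) \<in> (del_edge E x y)\<^sup>*" for w
  proof -
    \<comment> \<open>The component of \<open>z\<close> avoids \<open>r\<close>, so none of its edges is \<open>p q\<close>.\<close>
    have "(z, w) \<in> (del_edge E p q)\<^sup>*"
      using that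
    proof (rule rtrancl_restrict_reachable)
      fix a b
      assume "(z, a) \<in> (del_edge E x y)\<^sup>*" "(a, b) \<in> del_edge E x y"
      with zr have "a \<noteq> r" "b \<noteq> r"
        by (auto intro: rtrancl_into_rtrancl)
      with \<open>(a, b) \<in> del_edge E x y\<close> \<open>r \<in> {p, q}\<close> show "(a, b) \<in> del_edge E p q"
        by (auto simp: del_edge_def)
    qed
    moreover have "(r, z) \<in> (del_edge E p q)\<^sup>*"
      using z assms(4,5) by blast
    ultimately show ?thesis
      by (meson rtrancl_trans)
  qed
  with z that show ?thesis
    by blast
qed

lemma ug_acyclic_subset: "ug_acyclic E \<Longrightarrow> F \<subseteq> E \<Longrightarrow> ug_acyclic F"
  unfolding ug_acyclic_def ug_cycle_def by blast

lemma edge_verts_times: "F \<subseteq> edge_verts F \<times> edge_verts F"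
  unfolding edge_verts_def by force

lemma edge_verts_sym_neighbour:
  assumes "sym F" "x \<in> edge_verts F"
  obtains y where "(x, y) \<in> F"
  using assms by (auto simp: edge_verts_def dest: symD)

definition upward_closed_on :: "'v set \<Rightarrow> ('v set \<Rightarrow> bool) \<Rightarrow> bool" where
  "upward_closed_on U P \<longleftrightarrow> (\<forall>A B. P A \<and> A \<subseteq> B \<and> B \<subseteq> U \<longrightarrow> P B)"

lemma upward_closed_onD: "upward_closed_on U P \<Longrightarrow> P A \<Longrightarrow> A \<subseteq> B \<Longrightarrow> B \<subseteq> U \<Longrightarrow> P B"
  unfolding upward_closed_on_def by blast

definition heavy_edges :: "('v \<times> 'v) set \<Rightarrow> 'v set \<Rightarrow> ('v set \<Rightarrow> bool) \<Rightarrow> ('v \<times> 'v) set" where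
  "heavy_edges E VC P = {e \<in> E. P (side_plus E VC e) \<and> P (side_minus E VC e)}"

lemma heavy_edges_subset: "heavy_edges E VC P \<subseteq> E"
  by (auto simp: heavy_edges_def)

lemma heavy_edges_sym: "sym E \<Longrightarrow> sym (heavy_edges E VC P)"
  by (auto simp: sym_def heavy_edges_def side_plus_eq side_minus_eq del_edge_commute)

lemma heavy_edges_reachable_side:
  assumes "sym E" "ug_acyclic E" "(x, y) \<in> heavy_edges E VC P" "x \<noteq> y"
    and up: "upward_closed_on VC P"
    and "r \<in> {p, q}" "(r, x) \<in> (del_edge E p q)\<^sup>*" "(r, y) \<in> (del_edge E p q)\<^sup>*"
  shows "P {w \<in> VC. (r, w) \<in> (del_edge E p q)\<^sup>*}"
proof -
  have "(x, y) \<notin> (del_edge E x y)\<^sup>*"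
    using assms(1-4) heavy_edges_subset by (metis subsetD ug_acyclic_tree_edge_separates)
  then obtain z where "z \<in> {x, y}"
    and z: "\<And>w. (z, w) \<in> (del_edge E x y)\<^sup>* \<Longrightarrow> (r, w) \<in> (del_edge E p q)\<^sup>*"
    using tree_edge_side_subset assms(1,6-8) by metis
  then have "P {w \<in> VC. (z, w) \<in> (del_edge E x y)\<^sup>*}"
    using assms(3) by (auto simp: heavy_edges_def side_plus_eq side_minus_eq)
  then show ?thesis
    by (rule upward_closed_onD[OF up]) (use z in auto)
qed

lemma heavy_edges_between:
  assumes "sym E" "ug_acyclic E" "\<And>v. (v, v) \<notin> E"
    and up: "upward_closed_on VC P"
    and "(a, a') \<in> heavy_edges E VC P" "(b, b') \<in> heavy_edges E VC P" "(p, q) \<in> E"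
    and "(p, a) \<in> (del_edge E p q)\<^sup>*" "(p, a') \<in> (del_edge E p q)\<^sup>*"
    and "(q, b) \<in> (del_edge E p q)\<^sup>*" "(q, b') \<in> (del_edge E p q)\<^sup>*"
  shows "(p, q) \<in> heavy_edges E VC P"
proof -
  have "a \<noteq> a'" "b \<noteq> b'"
    using assms(3,5,6) heavy_edges_subset[of E VC P] by blast+
  have "P (side_minus E VC (p, q))"
    unfolding side_minus_eq
    by (rule heavy_edges_reachable_side[OF assms(1,2,5) \<open>a \<noteq> a'\<close> up]) (use assms(8,9) in auto)
  moreover have "P (side_plus E VC (p, q))"
    unfolding side_plus_eq
    by (rule heavy_edges_reachable_side[OF assms(1,2,6) \<open>b \<noteq> b'\<close> up]) (use assms(10,11) in auto)
  ultimately show ?thesis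
    using \<open>(p, q) \<in> E\<close> by (simp add: heavy_edges_def)
qed

lemma exit_edge_between_components:
  assumes "F \<subseteq> E" "sym E" "sym F" "(a, a') \<in> F" "(b, b') \<in> F"
    and "(a, b) \<in> E\<^sup>*" "(a, b) \<notin> F\<^sup>*"
  obtains p q where "(p, q) \<in> E" "(p, q) \<notin> F"
    "(p, a) \<in> (del_edge E p q)\<^sup>*" "(p, a') \<in> (del_edge E p q)\<^sup>*"
    "(q, b) \<in> (del_edge E p q)\<^sup>*" "(q, b') \<in> (del_edge E p q)\<^sup>*"
proof -
  define C where "C = {z. (a, z) \<in> F\<^sup>*}"
  have "a \<in> C"
    by (simp add: C_def)
  have "b \<notin> C" "b' \<notin> C"
    using assms(3,5,7) by (auto simp: C_def dest: symD intro: rtrancl_into_rtrancl)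
  obtain p q where pq: "(p, q) \<in> E" and "p \<in> C" "q \<notin> C"
    and qb: "(q, b) \<in> (Restr E (- C))\<^sup>*"
    using rtrancl_exit_edge[OF assms(6) \<open>a \<in> C\<close> \<open>b \<notin> C\<close>] by blast
  let ?D = "del_edge E p q"
  have "(p, q) \<notin> F"
    using \<open>p \<in> C\<close> \<open>q \<notin> C\<close> by (auto simp: C_def intro: rtrancl_into_rtrancl)
  have outside: "Restr E (- C) \<subseteq> ?D"
    using \<open>p \<in> C\<close> by (auto simp: del_edge_def)
  have "(q, b) \<in> ?D\<^sup>*"
    using qb rtrancl_mono[OF outside] by blast
  moreover have "(b, b') \<in> ?D"
    using outside assms(1,5) \<open>b \<notin> C\<close> \<open>b' \<notin> C\<close> by blast
  ultimately have "(q, b') \<in> ?D\<^sup>*"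
    by (rule rtrancl_into_rtrancl)
  have "Restr F C \<subseteq> ?D"
    using \<open>q \<notin> C\<close> assms(1) by (auto simp: del_edge_def)
  then have inside: "(a, w) \<in> ?D\<^sup>*" if "w \<in> C" for w
    using rtrancl_mono rtrancl_Restr_reachable[of a w F] that unfolding C_def by blast
  have "(p, a) \<in> ?D\<^sup>*"
    using inside[OF \<open>p \<in> C\<close>] \<open>sym E\<close> by (rule rtrancl_del_edge_sym[rotated])
  moreover have "(a, a') \<in> ?D\<^sup>*"
    using inside assms(4) by (simp add: C_def r_into_rtrancl)
  ultimately have "(p, a') \<in> ?D\<^sup>*"
    by (rule rtrancl_trans)
  show ?thesis
    by (rule that) fact+
qed

lemma heavy_edges_connected:
  assumes tree: "is_tree V E" and "sym E" and loop_free: "\<And>v. (v, v) \<notin> E"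
    and up: "upward_closed_on VC P"
  shows "ug_connected (edge_verts (heavy_edges E VC P)) (heavy_edges E VC P)"
  unfolding ug_connected_def
proof (intro ballI)
  let ?F = "heavy_edges E VC P"
  have "sym ?F"
    using \<open>sym E\<close> by (rule heavy_edges_sym)
  have "ug_acyclic E"
    using tree by (simp add: is_tree_def)
  fix a b
  assume "a \<in> edge_verts ?F" "b \<in> edge_verts ?F"
  with \<open>sym ?F\<close> obtain a' b' where aa': "(a, a') \<in> ?F" and bb': "(b, b') \<in> ?F"
    by (metis edge_verts_sym_neighbour)
  have "(a, b) \<in> E\<^sup>*"
    using tree aa' bb' heavy_edges_subset unfolding is_tree_def ug_connected_def by blast
  show "(a, b) \<in> ?F\<^sup>*"
  proof (rule ccontr)
    assume "(a, b) \<notin> ?F\<^sup>*"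
    with heavy_edges_subset \<open>sym E\<close> \<open>sym ?F\<close> aa' bb' \<open>(a, b) \<in> E\<^sup>*\<close>
    obtain p q where "(p, q) \<notin> ?F" and between: "(p, q) \<in> E"
      "(p, a) \<in> (del_edge E p q)\<^sup>*" "(p, a') \<in> (del_edge E p q)\<^sup>*"
      "(q, b) \<in> (del_edge E p q)\<^sup>*" "(q, b') \<in> (del_edge E p q)\<^sup>*"
      by (rule exit_edge_between_components)
    moreover have "(p, q) \<in> ?F"
      using between by (rule heavy_edges_between[OF \<open>sym E\<close> \<open>ug_acyclic E\<close> loop_free up aa' bb'])
    ultimately show False
      by blast
  qed
qed

theorem lemma2:
  fixes V :: "'v set" and E :: "('v \<times> 'v) set" and VC :: "'v set"
    and R :: "'r set" and S :: "'s set"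
    and locR :: "'r \<Rightarrow> 'v" and locS :: "'s \<Rightarrow> 'v"
    and N :: "'v \<Rightarrow> nat" and E\<^sub>\<beta> :: "('v \<times> 'v) set"
  assumes topo: "sym_tree_topology V E VC"
    and finR: "finite R" and finS: "finite S"
    and RS: "card R \<le> card S"
    and locR: "locR ` R \<subseteq> VC" and locS: "locS ` S \<subseteq> VC"
    and N_def: "\<And>v. N v = card {x \<in> R. locR x = v} + card {y \<in> S. locS y = v}"
    and Eb_def: "E\<^sub>\<beta> = {e \<in> E. min (\<Sum>v\<in>side_plus E VC e. N v) (\<Sum>v\<in>side_minus E VC e. N v) \<ge> card R}"
  shows "is_tree (edge_verts E\<^sub>\<beta>) E\<^sub>\<beta>"
proof -
  have tree: "is_tree V E" and "sym E" "\<And>v. (v, v) \<notin> E" "finite VC"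
    using topo by (auto simp: sym_tree_topology_def intro: finite_subset)
  let ?P = "\<lambda>X. card R \<le> (\<Sum>v\<in>X. N v)"
  have Eb: "E\<^sub>\<beta> = heavy_edges E VC ?P"
    by (simp add: Eb_def heavy_edges_def)
  have "upward_closed_on VC ?P"
    unfolding upward_closed_on_def
    by (meson finite_subset le_trans sum_mono2 zero_le \<open>finite VC\<close>)
  have "ug_connected (edge_verts E\<^sub>\<beta>) E\<^sub>\<beta>"
    unfolding Eb using tree \<open>sym E\<close> \<open>\<And>v. (v, v) \<notin> E\<close> \<open>upward_closed_on VC ?P\<close>
    by (rule heavy_edges_connected)
  moreover have "ug_acyclic E\<^sub>\<beta>"
    using tree heavy_edges_subset unfolding Eb is_tree_def by (blast intro: ug_acyclic_subset)
  ultimately show ?thesis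
    unfolding is_tree_def by (simp add: edge_verts_times)
qed

end
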